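(* Let $Q$ be a loop. (i) If $N(Q)$ is a normal subloop of $Q$, then $Q/N(Q)$ is an abelian group if and only if for all $x,y,z,u,v\in Q$: $[[x,y,z],u,v]=[u,[x,y,z],v]=[u,v,[x,y,z]]=1$ and $[[x,y],z,u]=[z,[x,y],u]=[z,u,[x,y]]=1$. (ii) $Q/Z(Q)$ is a group if and only if for all $x,y,z,u,v\in Q$: $[[x,y,z],u,v]=[u,[x,y,z],v]=[u,v,[x,y,z]]=1$ and $[[x,y,z],u]=1$.
   Context: A loop $(Q,\cdot)$ is a set with a binary operation and an identity $1$ such that all left translations $L_x:y\mapsto xy$ and right translations $R_x:y\mapsto yx$ are bijections; $x\backslash y=yL_x^{-1}$. The associator is $[x,y,z]=(x\cdot yz)\backslash(xy\cdot z)$ and the commutator is $[x,y]=(yx)\backslash(xy)$ (juxtaposition denotes multiplication, e.g. $x\cdot yz=x\cdot(y\cdot z)$). $\mathrm{Inn}(Q)$ is the set of elements of $\langle L_x,R_x:x\in Q\rangle$ fixing $1$; a subloop $S$ (nonempty subset closed under multiplication and both divisions) is normal if $S\varphi=S$ for all $\varphi\in\mathrm{Inn}(Q)$, and then $Q/S$ is the loop of cosets $xS$ with $xS\cdot yS=(xy)S$. The nucleus is $N(Q)=\{a\in Q: ax\cdot y=a\cdot xy,\ xy\cdot a=x\cdot ya,\ xa\cdot y=x\cdot ay\ \forall x,y\in Q\}$, the commutant is $C(Q)=\{a: ax=xa\ \forall x\}$, and the center is $Z(Q)=C(Q)\cap N(Q)$, which is always a normal subloop. *)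

theory Defs
  imports "HOL-Algebra.Group" "HOL-Library.FuncSet"
begin

definition loop :: "'a set \<Rightarrow> ('a \<Rightarrow> 'a \<Rightarrow> 'a) \<Rightarrow> 'a \<Rightarrow> bool" where
  "loop Q m e \<longleftrightarrow> e \<in> Q \<and> (\<forall>x\<in>Q. \<forall>y\<in>Q. m x y \<in> Q)
     \<and> (\<forall>x\<in>Q. m e x = x \<and> m x e = x)
     \<and> (\<forall>x\<in>Q. bij_betw (m x) Q Q)
     \<and> (\<forall>x\<in>Q. bij_betw (\<lambda>y. m y x) Q Q)"

definition Ltr :: "'a set \<Rightarrow> ('a \<Rightarrow> 'a \<Rightarrow> 'a) \<Rightarrow> 'a \<Rightarrow> ('a \<Rightarrow> 'a)" where
  "Ltr Q m x = restrict (\<lambda>y. m x y) Q"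

definition Rtr :: "'a set \<Rightarrow> ('a \<Rightarrow> 'a \<Rightarrow> 'a) \<Rightarrow> 'a \<Rightarrow> ('a \<Rightarrow> 'a)" where
  "Rtr Q m x = restrict (\<lambda>y. m y x) Q"

definition ldiv :: "'a set \<Rightarrow> ('a \<Rightarrow> 'a \<Rightarrow> 'a) \<Rightarrow> 'a \<Rightarrow> 'a \<Rightarrow> 'a" where
  "ldiv Q m x y = (THE z. z \<in> Q \<and> m x z = y)"

definition rdiv :: "'a set \<Rightarrow> ('a \<Rightarrow> 'a \<Rightarrow> 'a) \<Rightarrow> 'a \<Rightarrow> 'a \<Rightarrow> 'a" where
  "rdiv Q m y x = (THE z. z \<in> Q \<and> m z x = y)"

definition assoc :: "'a set \<Rightarrow> ('a \<Rightarrow> 'a \<Rightarrow> 'a) \<Rightarrow> 'a \<Rightarrow> 'a \<Rightarrow> 'a \<Rightarrow> 'a" where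
  "assoc Q m x y z = ldiv Q m (m x (m y z)) (m (m x y) z)"

definition comm :: "'a set \<Rightarrow> ('a \<Rightarrow> 'a \<Rightarrow> 'a) \<Rightarrow> 'a \<Rightarrow> 'a \<Rightarrow> 'a" where
  "comm Q m x y = ldiv Q m (m y x) (m x y)"

inductive_set Mlt :: "'a set \<Rightarrow> ('a \<Rightarrow> 'a \<Rightarrow> 'a) \<Rightarrow> ('a \<Rightarrow> 'a) set"
  for Q m where
  Mlt_id: "restrict id Q \<in> Mlt Q m"
| Mlt_L: "x \<in> Q \<Longrightarrow> Ltr Q m x \<in> Mlt Q m"
| Mlt_R: "x \<in> Q \<Longrightarrow> Rtr Q m x \<in> Mlt Q m"
| Mlt_comp: "f \<in> Mlt Q m \<Longrightarrow> g \<in> Mlt Q m \<Longrightarrow> compose Q g f \<in> Mlt Q m"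
| Mlt_inv: "f \<in> Mlt Q m \<Longrightarrow> restrict (inv_into Q f) Q \<in> Mlt Q m"

definition Inn :: "'a set \<Rightarrow> ('a \<Rightarrow> 'a \<Rightarrow> 'a) \<Rightarrow> 'a \<Rightarrow> ('a \<Rightarrow> 'a) set" where
  "Inn Q m e = {\<phi> \<in> Mlt Q m. \<phi> e = e}"

definition subloop :: "'a set \<Rightarrow> ('a \<Rightarrow> 'a \<Rightarrow> 'a) \<Rightarrow> 'a set \<Rightarrow> bool" where
  "subloop Q m S \<longleftrightarrow> S \<subseteq> Q \<and> S \<noteq> {}
     \<and> (\<forall>x\<in>S. \<forall>y\<in>S. m x y \<in> S \<and> ldiv Q m x y \<in> S \<and> rdiv Q m x y \<in> S)"

definition normal_subloop :: "'a set \<Rightarrow> ('a \<Rightarrow> 'a \<Rightarrow> 'a) \<Rightarrow> 'a \<Rightarrow> 'a set \<Rightarrow> bool" where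
  "normal_subloop Q m e S \<longleftrightarrow> subloop Q m S \<and> (\<forall>\<phi>\<in>Inn Q m e. \<phi> ` S = S)"

definition nucleus :: "'a set \<Rightarrow> ('a \<Rightarrow> 'a \<Rightarrow> 'a) \<Rightarrow> 'a set" where
  "nucleus Q m = {a \<in> Q. \<forall>x\<in>Q. \<forall>y\<in>Q.
      m (m a x) y = m a (m x y) \<and> m (m x y) a = m x (m y a) \<and> m (m x a) y = m x (m a y)}"

definition commutant :: "'a set \<Rightarrow> ('a \<Rightarrow> 'a \<Rightarrow> 'a) \<Rightarrow> 'a set" where
  "commutant Q m = {a \<in> Q. \<forall>x\<in>Q. m a x = m x a}"

definition center :: "'a set \<Rightarrow> ('a \<Rightarrow> 'a \<Rightarrow> 'a) \<Rightarrow> 'a set" where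
  "center Q m = commutant Q m \<inter> nucleus Q m"

definition lcoset :: "('a \<Rightarrow> 'a \<Rightarrow> 'a) \<Rightarrow> 'a \<Rightarrow> 'a set \<Rightarrow> 'a set" where
  "lcoset m x S = {m x s | s. s \<in> S}"

definition quot_loop :: "'a set \<Rightarrow> ('a \<Rightarrow> 'a \<Rightarrow> 'a) \<Rightarrow> 'a set \<Rightarrow> 'a set monoid" where
  "quot_loop Q m S = \<lparr> carrier = {lcoset m x S | x. x \<in> Q},
      mult = (\<lambda>A B. lcoset m (m (SOME a. a \<in> A) (SOME b. b \<in> B)) S),
      one = S \<rparr>"

end

theory Submission
  imports Defs
begin

text \<open>
  If \<open>S\<close> is a subloop of the nucleus with \<open>Sy \<subseteq> yS\<close>, then products of cosets can be
  computed on representatives, \<open>xS \<cdot> yS = (xy)S\<close>. So \<open>Q/S\<close> is associative, hence a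
  group, iff \<open>(xy\<cdot>z)S = (x\<cdot>yz)S\<close>, i.e. iff every associator lies in \<open>S\<close>; likewise it is
  commutative iff every commutator lies in \<open>S\<close>. Both a normal \<open>N(Q)\<close> and \<open>Z(Q)\<close> are
  such subloops, and an element lies in \<open>N(Q)\<close> (resp. \<open>Z(Q)\<close>) iff all associators
  (and commutators) having it as an argument are trivial.
\<close>

locale loop_struct =
  fixes Q :: "'a set" and m :: "'a \<Rightarrow> 'a \<Rightarrow> 'a" and e :: 'a
  assumes is_loop: "loop Q m e"
begin

lemma one_closed [simp]: "e \<in> Q"
  using is_loop unfolding loop_def by blast

lemma mult_closed [simp]: "x \<in> Q \<Longrightarrow> y \<in> Q \<Longrightarrow> m x y \<in> Q"
  using is_loop unfolding loop_def by blast

lemma left_one [simp]: "x \<in> Q \<Longrightarrow> m e x = x"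
  using is_loop unfolding loop_def by blast

lemma right_one [simp]: "x \<in> Q \<Longrightarrow> m x e = x"
  using is_loop unfolding loop_def by blast

lemma bij_left_mult: "x \<in> Q \<Longrightarrow> bij_betw (m x) Q Q"
  using is_loop unfolding loop_def by blast

lemma bij_right_mult: "x \<in> Q \<Longrightarrow> bij_betw (\<lambda>y. m y x) Q Q"
  using is_loop unfolding loop_def by blast

lemma left_cancel: "x \<in> Q \<Longrightarrow> y \<in> Q \<Longrightarrow> z \<in> Q \<Longrightarrow> m x y = m x z \<Longrightarrow> y = z"
  using bij_left_mult[of x] unfolding bij_betw_def inj_on_def by blast

lemma right_cancel: "x \<in> Q \<Longrightarrow> y \<in> Q \<Longrightarrow> z \<in> Q \<Longrightarrow> m y x = m z x \<Longrightarrow> y = z"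
  using bij_right_mult[of x] unfolding bij_betw_def inj_on_def by blast

lemma left_solvable: "x \<in> Q \<Longrightarrow> y \<in> Q \<Longrightarrow> \<exists>z\<in>Q. m x z = y"
  using bij_left_mult[of x] unfolding bij_betw_def by (metis imageE)

lemma right_solvable: "x \<in> Q \<Longrightarrow> y \<in> Q \<Longrightarrow> \<exists>z\<in>Q. m z x = y"
  using bij_right_mult[of x] unfolding bij_betw_def by (metis (no_types, lifting) imageE)

lemma ldiv_eqI: "x \<in> Q \<Longrightarrow> z \<in> Q \<Longrightarrow> m x z = y \<Longrightarrow> ldiv Q m x y = z"
  unfolding ldiv_def by (rule the_equality) (auto intro: left_cancel)

lemma ldiv_closed [simp]: "x \<in> Q \<Longrightarrow> y \<in> Q \<Longrightarrow> ldiv Q m x y \<in> Q"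
  using left_solvable ldiv_eqI by metis

lemma mult_ldiv [simp]: "x \<in> Q \<Longrightarrow> y \<in> Q \<Longrightarrow> m x (ldiv Q m x y) = y"
  using left_solvable ldiv_eqI by metis

lemma ldiv_eq_one_iff: "x \<in> Q \<Longrightarrow> y \<in> Q \<Longrightarrow> ldiv Q m x y = e \<longleftrightarrow> y = x"
  by (metis ldiv_eqI mult_ldiv one_closed right_one)

lemma assoc_closed [simp]: "x \<in> Q \<Longrightarrow> y \<in> Q \<Longrightarrow> z \<in> Q \<Longrightarrow> assoc Q m x y z \<in> Q"
  unfolding assoc_def by simp

lemma comm_closed [simp]: "x \<in> Q \<Longrightarrow> y \<in> Q \<Longrightarrow> comm Q m x y \<in> Q"
  unfolding comm_def by simp

lemma assoc_eq_one_iff: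
  "x \<in> Q \<Longrightarrow> y \<in> Q \<Longrightarrow> z \<in> Q \<Longrightarrow> assoc Q m x y z = e \<longleftrightarrow> m (m x y) z = m x (m y z)"
  unfolding assoc_def by (simp add: ldiv_eq_one_iff)

lemma comm_eq_one_iff: "x \<in> Q \<Longrightarrow> y \<in> Q \<Longrightarrow> comm Q m x y = e \<longleftrightarrow> m x y = m y x"
  unfolding comm_def by (simp add: ldiv_eq_one_iff)

subsection \<open>The nucleus and the center\<close>

lemma nucleusD:
  assumes "a \<in> nucleus Q m" "x \<in> Q" "y \<in> Q"
  shows "a \<in> Q" "m (m a x) y = m a (m x y)" "m (m x y) a = m x (m y a)"
    "m (m x a) y = m x (m a y)"
  using assms unfolding nucleus_def by auto

lemma nucleus_subset: "a \<in> nucleus Q m \<Longrightarrow> a \<in> Q"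
  unfolding nucleus_def by auto

lemma one_in_nucleus: "e \<in> nucleus Q m"
  unfolding nucleus_def by auto

lemma mem_nucleus_iff_assoc:
  "a \<in> nucleus Q m \<longleftrightarrow> a \<in> Q \<and>
     (\<forall>u\<in>Q. \<forall>v\<in>Q. assoc Q m a u v = e \<and> assoc Q m u a v = e \<and> assoc Q m u v a = e)"
  unfolding nucleus_def by (auto simp: assoc_eq_one_iff)

lemma mem_center_iff_assoc_comm:
  "a \<in> center Q m \<longleftrightarrow> a \<in> nucleus Q m \<and> (\<forall>u\<in>Q. comm Q m a u = e)"
  unfolding center_def commutant_def by (auto simp: comm_eq_one_iff dest: nucleus_subset)

lemma nucleus_mult_closed:
  assumes a: "a \<in> nucleus Q m" and b: "b \<in> nucleus Q m"
  shows "m a b \<in> nucleus Q m"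
proof -
  have aQ: "a \<in> Q" and bQ: "b \<in> Q" using a b by (auto dest: nucleus_subset)
  show ?thesis unfolding nucleus_def
  proof (intro CollectI conjI ballI)
    fix x y assume x: "x \<in> Q" and y: "y \<in> Q"
    show "m (m (m a b) x) y = m (m a b) (m x y)"
      using nucleusD[OF a] nucleusD[OF b] aQ bQ x y by simp
    have "m (m x y) (m a b) = m (m (m x y) a) b" using nucleusD(3)[OF b, of "m x y" a] x y aQ by simp
    also have "\<dots> = m (m x (m y a)) b" using nucleusD(3)[OF a x y] by simp
    also have "\<dots> = m x (m (m y a) b)" using nucleusD(3)[OF b, of x "m y a"] x y aQ by simp
    also have "\<dots> = m x (m y (m a b))" using nucleusD(3)[OF b y aQ] by simp
    finally show "m (m x y) (m a b) = m x (m y (m a b))" .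
    have "m (m x (m a b)) y = m (m (m x a) b) y" using nucleusD(3)[OF b x aQ] by simp
    also have "\<dots> = m (m x a) (m b y)" using nucleusD(4)[OF b, of "m x a" y] x y aQ by simp
    also have "\<dots> = m x (m a (m b y))" using nucleusD(4)[OF a, of x "m b y"] x y bQ by simp
    also have "\<dots> = m x (m (m a b) y)" using nucleusD(2)[OF a bQ y] by simp
    finally show "m (m x (m a b)) y = m x (m (m a b) y)" .
  qed (use aQ bQ in simp)
qed

lemma nucleus_inverse:
  assumes a: "a \<in> nucleus Q m"
  obtains a' where "a' \<in> nucleus Q m" "m a a' = e" "m a' a = e"
proof -
  have aQ: "a \<in> Q" using a by (rule nucleus_subset)
  obtain a' where a'Q: "a' \<in> Q" and aa': "m a a' = e" using left_solvable[OF aQ one_closed] by blast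
  have a'a: "m a' a = e"
  proof -
    have "m a (m a' a) = m a e" using nucleusD(2)[OF a a'Q aQ] aa' aQ by simp
    then show ?thesis using left_cancel aQ a'Q by (metis mult_closed one_closed)
  qed
  have "a' \<in> nucleus Q m" unfolding nucleus_def
  proof (intro CollectI conjI ballI)
    fix x y assume x: "x \<in> Q" and y: "y \<in> Q"
    show "m (m a' x) y = m a' (m x y)"
    proof (rule left_cancel[OF aQ])
      show "m a (m (m a' x) y) = m a (m a' (m x y))"
        using nucleusD[OF a] a'Q x y aa' by (metis mult_closed left_one)
    qed (use a'Q x y in auto)
    show "m (m x y) a' = m x (m y a')"
    proof (rule right_cancel[OF aQ])
      show "m (m (m x y) a') a = m (m x (m y a')) a"
        using nucleusD[OF a] a'Q x y a'a by (metis mult_closed right_one)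
    qed (use a'Q x y in auto)
    have "y = m a (m a' y)" using nucleusD[OF a] a'Q y aa' by (metis left_one)
    then have "m (m x a') y = m (m (m x a') a) (m a' y)"
      using nucleusD(4)[OF a, of "m x a'" "m a' y"] x y a'Q by simp
    also have "\<dots> = m x (m a' y)" using nucleusD(3)[OF a x a'Q] a'a x by simp
    finally show "m (m x a') y = m x (m a' y)" .
  qed (use a'Q in simp)
  then show ?thesis using that aa' a'a by blast
qed

lemma nucleus_ldiv_closed:
  assumes a: "a \<in> nucleus Q m" and b: "b \<in> nucleus Q m"
  shows "ldiv Q m a b \<in> nucleus Q m"
proof -
  obtain a' where a': "a' \<in> nucleus Q m" "m a a' = e" "m a' a = e"
    using a by (rule nucleus_inverse)
  have aQ: "a \<in> Q" and a'Q: "a' \<in> Q" and bQ: "b \<in> Q"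
    using a a'(1) b by (auto dest: nucleus_subset)
  have "ldiv Q m a b = m a' b"
    using nucleusD(2)[OF a a'Q bQ] a'(2) a'Q bQ by (intro ldiv_eqI[OF aQ]) simp_all
  then show ?thesis using nucleus_mult_closed[OF a'(1) b] by simp
qed

lemma center_subset_nucleus: "a \<in> center Q m \<Longrightarrow> a \<in> nucleus Q m"
  unfolding center_def by blast

lemma center_commute: "a \<in> center Q m \<Longrightarrow> x \<in> Q \<Longrightarrow> m a x = m x a"
  unfolding center_def commutant_def by blast

lemma centerI: "a \<in> nucleus Q m \<Longrightarrow> (\<And>x. x \<in> Q \<Longrightarrow> m a x = m x a) \<Longrightarrow> a \<in> center Q m"
  unfolding center_def commutant_def by (auto dest: nucleus_subset)

lemma center_mult_closed:
  assumes s: "s \<in> center Q m" and t: "t \<in> center Q m"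
  shows "m s t \<in> center Q m"
proof (rule centerI)
  have sN: "s \<in> nucleus Q m" and tN: "t \<in> nucleus Q m"
    using s t by (auto dest: center_subset_nucleus)
  then have sQ: "s \<in> Q" and tQ: "t \<in> Q" by (auto dest: nucleus_subset)
  show "m s t \<in> nucleus Q m" using sN tN by (rule nucleus_mult_closed)
  fix x assume x: "x \<in> Q"
  have "m (m s t) x = m s (m x t)" using nucleusD(2)[OF sN tQ x] center_commute[OF t x] by simp
  also have "\<dots> = m (m x s) t" using nucleusD(2)[OF sN x tQ] center_commute[OF s x] by simp
  also have "\<dots> = m x (m s t)" using nucleusD(3)[OF tN x sQ] by simp
  finally show "m (m s t) x = m x (m s t)" .
qed

lemma center_ldiv_closed:
  assumes s: "s \<in> center Q m" and t: "t \<in> center Q m"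
  shows "ldiv Q m s t \<in> center Q m"
proof -
  define c where "c = ldiv Q m s t"
  have sN: "s \<in> nucleus Q m" and tN: "t \<in> nucleus Q m"
    using s t by (auto dest: center_subset_nucleus)
  then have sQ: "s \<in> Q" and tQ: "t \<in> Q" by (auto dest: nucleus_subset)
  have cN: "c \<in> nucleus Q m" unfolding c_def using sN tN by (rule nucleus_ldiv_closed)
  have cQ: "c \<in> Q" and sc: "m s c = t" unfolding c_def using sQ tQ by simp_all
  show ?thesis unfolding c_def[symmetric]
  proof (rule centerI[OF cN])
    fix x assume x: "x \<in> Q"
    have "m s (m c x) = m x t" using nucleusD(2)[OF sN cQ x] sc center_commute[OF t x] by simp
    also have "\<dots> = m (m s x) c" using nucleusD(3)[OF cN x sQ] sc center_commute[OF s x] by simp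
    also have "\<dots> = m s (m x c)" using nucleusD(2)[OF sN x cQ] by simp
    finally show "m c x = m x c" using left_cancel[OF sQ] cQ x by simp
  qed
qed

end

subsection \<open>Quotients by normal subloops of the nucleus\<close>

locale nuclear_normal_subloop = loop_struct +
  fixes S :: "'a set"
  assumes subset_nucleus: "S \<subseteq> nucleus Q m"
    and one_mem: "e \<in> S"
    and mult_mem: "s \<in> S \<Longrightarrow> t \<in> S \<Longrightarrow> m s t \<in> S"
    and ldiv_mem: "s \<in> S \<Longrightarrow> t \<in> S \<Longrightarrow> ldiv Q m s t \<in> S"
    and normal: "s \<in> S \<Longrightarrow> y \<in> Q \<Longrightarrow> \<exists>s'\<in>S. m s y = m y s'"
begin

abbreviation coset :: "'a \<Rightarrow> 'a set" where "coset x \<equiv> lcoset m x S"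

lemma mem_nucleusI: "s \<in> S \<Longrightarrow> s \<in> nucleus Q m"
  using subset_nucleus by blast

lemma mem_carrier: "s \<in> S \<Longrightarrow> s \<in> Q"
  using mem_nucleusI nucleus_subset by blast

lemma mem_own_coset: "x \<in> Q \<Longrightarrow> x \<in> coset x"
  unfolding lcoset_def using one_mem by (auto intro!: exI[of _ e])

lemma coset_eqI:
  assumes x: "x \<in> Q" and a: "a \<in> coset x"
  shows "coset a = coset x"
proof -
  obtain s where s: "s \<in> S" and as: "a = m x s" using a unfolding lcoset_def by blast
  note sN = mem_nucleusI[OF s]
  show ?thesis
  proof
    show "coset a \<subseteq> coset x"
    proof
      fix b assume "b \<in> coset a"
      then obtain t where t: "t \<in> S" "b = m a t" unfolding lcoset_def by blast
      have "b = m x (m s t)" using t as nucleusD(4)[OF sN x mem_carrier[OF t(1)]] by simp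
      then show "b \<in> coset x" unfolding lcoset_def using mult_mem s t by blast
    qed
    show "coset x \<subseteq> coset a"
    proof
      fix b assume "b \<in> coset x"
      then obtain t where t: "t \<in> S" "b = m x t" unfolding lcoset_def by blast
      define r where "r = ldiv Q m s t"
      have r: "r \<in> S" "m s r = t" unfolding r_def using ldiv_mem s t mem_carrier by auto
      have "b = m a r" using t as r nucleusD(4)[OF sN x mem_carrier[OF r(1)]] by simp
      then show "b \<in> coset a" unfolding lcoset_def using r by blast
    qed
  qed
qed

lemma mult_mem_coset:
  assumes x: "x \<in> Q" and y: "y \<in> Q" and a: "a \<in> coset x" and b: "b \<in> coset y"
  shows "m a b \<in> coset (m x y)"
proof -
  obtain s where s: "s \<in> S" and as: "a = m x s" using a unfolding lcoset_def by blast
  obtain t where t: "t \<in> S" and bt: "b = m y t" using b unfolding lcoset_def by blast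
  obtain s' where s': "s' \<in> S" "m s y = m y s'" using normal s y by blast
  note sQ = mem_carrier[OF s] and tQ = mem_carrier[OF t] and s'Q = mem_carrier[OF s'(1)]
  have "m a b = m (m (m x s) y) t"
    using as bt nucleusD(3)[OF mem_nucleusI[OF t], of "m x s" y] x y sQ by simp
  also have "\<dots> = m (m x (m y s')) t" using nucleusD(4)[OF mem_nucleusI[OF s] x y] s' by simp
  also have "\<dots> = m (m (m x y) s') t" using nucleusD(3)[OF mem_nucleusI[OF s'(1)] x y] by simp
  also have "\<dots> = m (m x y) (m s' t)"
    using nucleusD(4)[OF mem_nucleusI[OF s'(1)], of "m x y" t] x y tQ by simp
  finally show ?thesis unfolding lcoset_def using mult_mem s' t by blast
qed

lemma carrier_quot: "carrier (quot_loop Q m S) = coset ` Q"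
  unfolding quot_loop_def by auto

lemma one_quot: "one (quot_loop Q m S) = coset e"
proof -
  have "coset e = S" unfolding lcoset_def using mem_carrier by (auto, metis left_one mem_carrier)
  then show ?thesis unfolding quot_loop_def by simp
qed

lemma mult_quot:
  assumes x: "x \<in> Q" and y: "y \<in> Q"
  shows "mult (quot_loop Q m S) (coset x) (coset y) = coset (m x y)"
proof -
  let ?a = "SOME a. a \<in> coset x" and ?b = "SOME b. b \<in> coset y"
  have a: "?a \<in> coset x" using mem_own_coset[OF x] by (rule someI)
  have b: "?b \<in> coset y" using mem_own_coset[OF y] by (rule someI)
  have "mult (quot_loop Q m S) (coset x) (coset y) = coset (m ?a ?b)"
    unfolding quot_loop_def by simp
  also have "\<dots> = coset (m x y)" by (rule coset_eqI[OF mult_closed[OF x y] mult_mem_coset[OF x y a b]])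
  finally show ?thesis .
qed

lemma ldiv_mem_iff_coset_eq:
  assumes x: "x \<in> Q" and y: "y \<in> Q"
  shows "ldiv Q m y x \<in> S \<longleftrightarrow> coset x = coset y"
proof
  assume "ldiv Q m y x \<in> S"
  then have "x \<in> coset y" unfolding lcoset_def using mult_ldiv[OF y x] by force
  then show "coset x = coset y" using coset_eqI y by blast
next
  assume "coset x = coset y"
  then have "x \<in> coset y" using mem_own_coset x by auto
  then obtain s where "s \<in> S" "x = m y s" unfolding lcoset_def by blast
  then show "ldiv Q m y x \<in> S" using ldiv_eqI[OF y mem_carrier] by simp
qed

lemma assoc_mem_iff:
  "x \<in> Q \<Longrightarrow> y \<in> Q \<Longrightarrow> z \<in> Q \<Longrightarrow>
     assoc Q m x y z \<in> S \<longleftrightarrow> coset (m (m x y) z) = coset (m x (m y z))"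
  unfolding assoc_def by (rule ldiv_mem_iff_coset_eq) auto

lemma comm_mem_iff:
  "x \<in> Q \<Longrightarrow> y \<in> Q \<Longrightarrow> comm Q m x y \<in> S \<longleftrightarrow> coset (m x y) = coset (m y x)"
  unfolding comm_def by (rule ldiv_mem_iff_coset_eq) auto

lemma group_quot_iff: "group (quot_loop Q m S) \<longleftrightarrow> (\<forall>x\<in>Q. \<forall>y\<in>Q. \<forall>z\<in>Q. assoc Q m x y z \<in> S)"
proof
  assume g: "group (quot_loop Q m S)"
  show "\<forall>x\<in>Q. \<forall>y\<in>Q. \<forall>z\<in>Q. assoc Q m x y z \<in> S"
  proof (intro ballI)
    fix x y z assume xyz: "x \<in> Q" "y \<in> Q" "z \<in> Q"
    then have "mult (quot_loop Q m S) (mult (quot_loop Q m S) (coset x) (coset y)) (coset z)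
             = mult (quot_loop Q m S) (coset x) (mult (quot_loop Q m S) (coset y) (coset z))"
      using group.axioms(1)[OF g] monoid.m_assoc carrier_quot by (metis image_eqI)
    then show "assoc Q m x y z \<in> S" using assoc_mem_iff xyz mult_quot by simp
  qed
next
  assume A: "\<forall>x\<in>Q. \<forall>y\<in>Q. \<forall>z\<in>Q. assoc Q m x y z \<in> S"
  show "group (quot_loop Q m S)"
  proof (rule groupI)
    fix a b assume "a \<in> carrier (quot_loop Q m S)" "b \<in> carrier (quot_loop Q m S)"
    then show "mult (quot_loop Q m S) a b \<in> carrier (quot_loop Q m S)"
      using carrier_quot mult_quot by auto
  next
    show "one (quot_loop Q m S) \<in> carrier (quot_loop Q m S)"
      using carrier_quot one_quot by auto
  next
    fix a b c
    assume "a \<in> carrier (quot_loop Q m S)" "b \<in> carrier (quot_loop Q m S)"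
      "c \<in> carrier (quot_loop Q m S)"
    then obtain x y z where "x \<in> Q" "y \<in> Q" "z \<in> Q" "a = coset x" "b = coset y" "c = coset z"
      using carrier_quot by auto
    then show "mult (quot_loop Q m S) (mult (quot_loop Q m S) a b) c
             = mult (quot_loop Q m S) a (mult (quot_loop Q m S) b c)"
      using mult_quot A assoc_mem_iff by simp
  next
    fix a assume "a \<in> carrier (quot_loop Q m S)"
    then obtain x where "x \<in> Q" "a = coset x" using carrier_quot by auto
    then show "mult (quot_loop Q m S) (one (quot_loop Q m S)) a = a"
      using mult_quot one_quot by simp
  next
    fix a assume "a \<in> carrier (quot_loop Q m S)"
    then obtain x where x: "x \<in> Q" "a = coset x" using carrier_quot by auto
    then obtain y where "y \<in> Q" "m y x = e" using right_solvable one_closed by blast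
    then show "\<exists>b\<in>carrier (quot_loop Q m S). mult (quot_loop Q m S) b a = one (quot_loop Q m S)"
      using x mult_quot one_quot carrier_quot by (metis image_eqI)
  qed
qed

lemma comm_group_quot_iff:
  "comm_group (quot_loop Q m S) \<longleftrightarrow>
     group (quot_loop Q m S) \<and> (\<forall>x\<in>Q. \<forall>y\<in>Q. comm Q m x y \<in> S)"
proof
  assume g: "comm_group (quot_loop Q m S)"
  have "comm Q m x y \<in> S" if xy: "x \<in> Q" "y \<in> Q" for x y
  proof -
    have "mult (quot_loop Q m S) (coset x) (coset y) = mult (quot_loop Q m S) (coset y) (coset x)"
      using comm_group.axioms(1)[OF g] comm_monoid.m_comm carrier_quot xy by (metis image_eqI)
    then show ?thesis using comm_mem_iff xy mult_quot by simp
  qed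
  then show "group (quot_loop Q m S) \<and> (\<forall>x\<in>Q. \<forall>y\<in>Q. comm Q m x y \<in> S)"
    using g by (simp add: comm_group_def)
next
  assume A: "group (quot_loop Q m S) \<and> (\<forall>x\<in>Q. \<forall>y\<in>Q. comm Q m x y \<in> S)"
  show "comm_group (quot_loop Q m S)"
  proof (rule group.group_comm_groupI)
    show "group (quot_loop Q m S)" using A by blast
    fix a b assume "a \<in> carrier (quot_loop Q m S)" "b \<in> carrier (quot_loop Q m S)"
    then obtain x y where "x \<in> Q" "y \<in> Q" "a = coset x" "b = coset y"
      using carrier_quot by auto
    then show "mult (quot_loop Q m S) a b = mult (quot_loop Q m S) b a"
      using A mult_quot comm_mem_iff by simp
  qed
qed

end

context loop_struct
begin

lemma nuclear_normal_subloop_center: "nuclear_normal_subloop Q m e (center Q m)"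
proof unfold_locales
  show "center Q m \<subseteq> nucleus Q m" using center_subset_nucleus by blast
  show "e \<in> center Q m" by (rule centerI[OF one_in_nucleus]) simp
qed (auto intro: center_mult_closed center_ldiv_closed dest: center_commute)

text \<open>
  The inner mapping \<open>z \<mapsto> y\<backslash>(zy)\<close> sends \<open>s\<close> to an \<open>s'\<close> with \<open>sy = ys'\<close>, and it
  preserves the normal nucleus.
\<close>

lemma nuclear_normal_subloop_nucleus:
  assumes N: "normal_subloop Q m e (nucleus Q m)"
  shows "nuclear_normal_subloop Q m e (nucleus Q m)"
proof unfold_locales
  fix s y assume s: "s \<in> nucleus Q m" and y: "y \<in> Q"
  define \<phi> where "\<phi> = compose Q (restrict (inv_into Q (Ltr Q m y)) Q) (Rtr Q m y)"
  have inj: "inj_on (Ltr Q m y) Q"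
    using bij_left_mult[OF y] unfolding bij_betw_def Ltr_def inj_on_def by auto
  have \<phi>_eq: "\<phi> z = ldiv Q m y (m z y)" if z: "z \<in> Q" for z
  proof -
    have "\<phi> z = inv_into Q (Ltr Q m y) (m z y)"
      unfolding \<phi>_def compose_def Rtr_def using z y by simp
    also have "\<dots> = ldiv Q m y (m z y)"
      by (rule inv_into_f_eq[OF inj]) (use y z in \<open>auto simp: Ltr_def\<close>)
    finally show ?thesis .
  qed
  have "\<phi> \<in> Mlt Q m" unfolding \<phi>_def by (intro Mlt_comp Mlt_R Mlt_inv Mlt_L y)
  moreover have "\<phi> e = e" using \<phi>_eq[of e] y ldiv_eqI[of y e y] by simp
  ultimately have "\<phi> ` nucleus Q m = nucleus Q m"
    using N unfolding normal_subloop_def Inn_def by blast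
  then have "\<phi> s \<in> nucleus Q m" using s by blast
  moreover have "m y (\<phi> s) = m s y" using \<phi>_eq nucleus_subset[OF s] y by simp
  ultimately show "\<exists>s'\<in>nucleus Q m. m s y = m y s'" by metis
qed (auto intro: one_in_nucleus nucleus_mult_closed nucleus_ldiv_closed)

end

theorem lemma2:
  fixes Q :: "'a set" and m :: "'a \<Rightarrow> 'a \<Rightarrow> 'a" and e :: 'a
  assumes "loop Q m e"
  shows "(normal_subloop Q m e (nucleus Q m) \<longrightarrow>
           (comm_group (quot_loop Q m (nucleus Q m)) \<longleftrightarrow>
             (\<forall>x\<in>Q. \<forall>y\<in>Q. \<forall>z\<in>Q. \<forall>u\<in>Q. \<forall>v\<in>Q.
                assoc Q m (assoc Q m x y z) u v = e
              \<and> assoc Q m u (assoc Q m x y z) v = e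
              \<and> assoc Q m u v (assoc Q m x y z) = e
              \<and> assoc Q m (comm Q m x y) z u = e
              \<and> assoc Q m z (comm Q m x y) u = e
              \<and> assoc Q m z u (comm Q m x y) = e)))
       \<and> (group (quot_loop Q m (center Q m)) \<longleftrightarrow>
             (\<forall>x\<in>Q. \<forall>y\<in>Q. \<forall>z\<in>Q. \<forall>u\<in>Q. \<forall>v\<in>Q.
                assoc Q m (assoc Q m x y z) u v = e
              \<and> assoc Q m u (assoc Q m x y z) v = e
              \<and> assoc Q m u v (assoc Q m x y z) = e
              \<and> comm Q m (assoc Q m x y z) u = e))"
proof -
  interpret loop_struct Q m e using assms by (rule loop_struct.intro)
  have nucleus_quot:
    "comm_group (quot_loop Q m (nucleus Q m)) \<longleftrightarrow>
       (\<forall>x\<in>Q. \<forall>y\<in>Q. \<forall>z\<in>Q. assoc Q m x y z \<in> nucleus Q m) \<and>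
       (\<forall>x\<in>Q. \<forall>y\<in>Q. comm Q m x y \<in> nucleus Q m)"
    if "normal_subloop Q m e (nucleus Q m)"
  proof -
    interpret N: nuclear_normal_subloop Q m e "nucleus Q m"
      using that by (rule nuclear_normal_subloop_nucleus)
    show ?thesis using N.comm_group_quot_iff N.group_quot_iff by simp
  qed
  have center_quot:
    "group (quot_loop Q m (center Q m)) \<longleftrightarrow> (\<forall>x\<in>Q. \<forall>y\<in>Q. \<forall>z\<in>Q. assoc Q m x y z \<in> center Q m)"
    using nuclear_normal_subloop.group_quot_iff[OF nuclear_normal_subloop_center] .
  show ?thesis
    unfolding center_quot mem_center_iff_assoc_comm
    by (auto simp: nucleus_quot mem_nucleus_iff_assoc)
qed

end
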